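(* If the communication graph of an SCS is a tree, then the system has a single ring.
   Context: Let $T=\{C_1,\dots,C_n\}$ be pairwise disjoint unit circles in the plane (trajectories) and $\epsilon<0.5$ a communication range. The graph of potential links $G_\epsilon(T)$ has the circle centers as nodes and an edge $\{i,j\}$ whenever the centers of $C_i,C_j$ are at distance at most $2+\epsilon$; it is assumed connected. Points of a circle are identified with angles (modulo $2\pi$), and a robot traverses a circle in one time unit. A schedule is a pair $(f,g)$, $f:T\to[0,2\pi)$, $g:T\to\{-1,1\}$ ($1$ = counterclockwise); the robot on $C_i$ is at angle $f(C_i)+2\pi g(C_i)t$ at time $t$. A communication graph $G=(V,E)$ is a connected spanning subgraph of $G_\epsilon(T)$. The link position $\phi_{ij}$ is the point of $C_i$ closest to $C_j$. A schedule is $G$-synchronized if for every $\{i,j\}\in E$ the robot on $C_i$ is at $\phi_{ij}$ exactly when the robot on $C_j$ is at $\phi_{ji}$. An SCS with communication graph $G$ consists of $n$ robots, one per circle, moving under a $G$-synchronized schedule with $g(C_i)=-g(C_j)$ for all $\{i,j\}\in E$. A ring of the SCS is the closed path (locus of points) visited by a robot that follows the assigned movement direction on each circle and always shifts to the neighboring circle (in $G$) at every link position it reaches; every arc of a circle between consecutive link positions lies on exactly one ring. *)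

theory Defs
  imports "HOL-Analysis.Analysis"
begin

text \<open>Circles are indexed by a finite vertex set V; circle C_i is the unit circle
  (sphere (c i) 1) in the complex plane with center c i.\<close>

definition unit_circle :: "complex \<Rightarrow> complex set" where
  "unit_circle z = sphere z 1"

definition adj :: "'a set set \<Rightarrow> ('a \<times> 'a) set" where
  "adj E = {(a, b). {a, b} \<in> E}"

definition simple_graph :: "'a set \<Rightarrow> 'a set set \<Rightarrow> bool" where
  "simple_graph V E \<longleftrightarrow> E \<subseteq> {{i, j} | i j. i \<in> V \<and> j \<in> V \<and> i \<noteq> j}"

definition graph_connected :: "'a set \<Rightarrow> 'a set set \<Rightarrow> bool" where
  "graph_connected V E \<longleftrightarrow> (\<forall>i\<in>V. \<forall>j\<in>V. (i, j) \<in> (adj E)\<^sup>*)"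

definition acyclic_graph :: "'a set \<Rightarrow> 'a set set \<Rightarrow> bool" where
  "acyclic_graph V E \<longleftrightarrow>
     \<not> (\<exists>vs. length vs \<ge> 3 \<and> distinct vs \<and> set vs \<subseteq> V \<and>
            (\<forall>k < length vs. {vs ! k, vs ! ((k + 1) mod length vs)} \<in> E))"

definition is_tree :: "'a set \<Rightarrow> 'a set set \<Rightarrow> bool" where
  "is_tree V E \<longleftrightarrow> simple_graph V E \<and> graph_connected V E \<and> acyclic_graph V E"

definition potential_links :: "'a set \<Rightarrow> ('a \<Rightarrow> complex) \<Rightarrow> real \<Rightarrow> 'a set set" where
  "potential_links V c eps =
     {{i, j} | i j. i \<in> V \<and> j \<in> V \<and> i \<noteq> j \<and> dist (c i) (c j) \<le> 2 + eps}"

definition comm_graph :: "'a set \<Rightarrow> ('a \<Rightarrow> complex) \<Rightarrow> real \<Rightarrow> 'a set set \<Rightarrow> bool" where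
  "comm_graph V c eps E \<longleftrightarrow> E \<subseteq> potential_links V c eps \<and> graph_connected V E"

text \<open>Link position phi_ij: the point of C_i closest to C_j.\<close>
definition link_pos :: "('a \<Rightarrow> complex) \<Rightarrow> 'a \<Rightarrow> 'a \<Rightarrow> complex" where
  "link_pos c i j = c i + (c j - c i) / complex_of_real (cmod (c j - c i))"

definition robot_pos :: "('a \<Rightarrow> complex) \<Rightarrow> ('a \<Rightarrow> real) \<Rightarrow> ('a \<Rightarrow> int) \<Rightarrow> 'a \<Rightarrow> real \<Rightarrow> complex" where
  "robot_pos c f g i t = c i + cis (f i + 2 * pi * of_int (g i) * t)"

definition schedule :: "'a set \<Rightarrow> ('a \<Rightarrow> real) \<Rightarrow> ('a \<Rightarrow> int) \<Rightarrow> bool" where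
  "schedule V f g \<longleftrightarrow> (\<forall>i\<in>V. 0 \<le> f i \<and> f i < 2 * pi \<and> g i \<in> {-1, 1})"

definition synchronized ::
  "('a \<Rightarrow> complex) \<Rightarrow> 'a set set \<Rightarrow> ('a \<Rightarrow> real) \<Rightarrow> ('a \<Rightarrow> int) \<Rightarrow> bool" where
  "synchronized c E f g \<longleftrightarrow>
     (\<forall>i j. {i, j} \<in> E \<longrightarrow> (\<forall>t::real. t \<ge> 0 \<longrightarrow>
        (robot_pos c f g i t = link_pos c i j \<longleftrightarrow> robot_pos c f g j t = link_pos c j i)))"

definition SCS ::
  "'a set \<Rightarrow> ('a \<Rightarrow> complex) \<Rightarrow> real \<Rightarrow> 'a set set \<Rightarrow> ('a \<Rightarrow> real) \<Rightarrow> ('a \<Rightarrow> int) \<Rightarrow> bool" where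
  "SCS V c eps E f g \<longleftrightarrow> comm_graph V c eps E \<and> schedule V f g \<and> synchronized c E f g \<and>
     (\<forall>i j. {i, j} \<in> E \<longrightarrow> g i = - g j)"

definition arc_reach ::
  "('a \<Rightarrow> complex) \<Rightarrow> ('a \<Rightarrow> int) \<Rightarrow> 'a \<Rightarrow> complex \<Rightarrow> complex \<Rightarrow> real \<Rightarrow> bool" where
  "arc_reach c g i p q s \<longleftrightarrow> 0 < s \<and> s \<le> 2 * pi \<and>
     q = c i + (p - c i) * cis (of_int (g i) * s)"

text \<open>Darts (i,j), {i,j} in E: the arc of C_i starting at link position phi_ij, traversed
  in direction g i.  Ring step: from dart (i,j) the robot travels on C_i until the first
  link position phi_ik it reaches, then shifts to C_k at phi_ki, i.e. dart (k,i).\<close>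
definition darts :: "'a set set \<Rightarrow> ('a \<times> 'a) set" where
  "darts E = {(i, j). {i, j} \<in> E}"

definition ring_step ::
  "('a \<Rightarrow> complex) \<Rightarrow> 'a set set \<Rightarrow> ('a \<Rightarrow> int) \<Rightarrow> (('a \<times> 'a) \<times> ('a \<times> 'a)) set" where
  "ring_step c E g = {((i, j), (k, i)) | i j k. {i, j} \<in> E \<and> {i, k} \<in> E \<and>
     (\<exists>s. arc_reach c g i (link_pos c i j) (link_pos c i k) s \<and>
        (\<forall>k' s'. {i, k'} \<in> E \<longrightarrow> arc_reach c g i (link_pos c i j) (link_pos c i k') s' \<longrightarrow> s \<le> s'))}"

text \<open>The rings are the orbits of ring_step on the darts (each arc between consecutive
  link positions lies on exactly one ring).  The system has a single ring iff all arcs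
  lie on the same ring.\<close>
definition single_ring :: "('a \<Rightarrow> complex) \<Rightarrow> 'a set set \<Rightarrow> ('a \<Rightarrow> int) \<Rightarrow> bool" where
  "single_ring c E g \<longleftrightarrow> (\<forall>d\<in>darts E. \<forall>d'\<in>darts E. (d, d') \<in> (ring_step c E g)\<^sup>*)"

end

theory Submission
  imports Defs
begin

(* The ring walk depends only on the cyclic order in which each circle meets its
   neighbours: leaving circle C_i at link position phi_ik, the robot enters C_k, and the
   walk is the face-tracing permutation (i,j) |-> (sigma_i j, i) of the rotation system
   sigma given by these cyclic orders.  In a tree every edge {i,j} is a bridge, so the
   walk started on dart (j,i) stays on j's side of the tree until it traverses (i,j);
   since the walk is a permutation of the finitely many darts it does return to (j,i),
   hence both darts of an edge lie on one ring.  Going once around a vertex with sigma_i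
   and crossing edges then joins all darts. *)

section \<open>Counterclockwise order of unit vectors\<close>

(* A full turn, not 0, when y = x: the same convention as arc_reach. *)
definition ccw_angle :: "complex \<Rightarrow> complex \<Rightarrow> real" where
  "ccw_angle x y = (if Arg2pi (y / x) = 0 then 2 * pi else Arg2pi (y / x))"

lemma ccw_angle_bounds: "0 < ccw_angle x y" "ccw_angle x y \<le> 2 * pi"
  using Arg2pi[of "y / x"] by (auto simp: ccw_angle_def)

lemma ccw_angle_rotates:
  assumes "cmod x = 1" "cmod y = 1"
  shows "y = x * cis (ccw_angle x y)"
proof -
  have "cmod (y / x) = 1" using assms by (simp add: norm_divide)
  then have "cis (Arg2pi (y / x)) = y / x"
    using complex_norm_eq_1_exp by (metis Arg2pi_eq cis_conv_exp mult.commute mult_1)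
  then have "cis (ccw_angle x y) = y / x" by (auto simp: ccw_angle_def)
  then show ?thesis using assms by auto
qed

lemma ccw_angle_unique:
  assumes "x \<noteq> 0" "y = x * cis s" "0 < s" "s \<le> 2 * pi"
  shows "ccw_angle x y = s"
proof -
  have yx: "y / x = cis s" using assms by simp
  show ?thesis
  proof (cases "s = 2 * pi")
    case True
    then show ?thesis using yx Arg2pi_of_real[of 1] by (simp add: ccw_angle_def)
  next
    case False
    then have "Arg2pi (cis s) = s"
      using assms by (intro Arg2pi_unique[of 1]) (auto simp: cis_conv_exp mult.commute)
    then show ?thesis using yx assms by (simp add: ccw_angle_def)
  qed
qed

lemma ccw_angle_split:
  assumes "cmod x = 1" "cmod y = 1" "cmod z = 1" "ccw_angle x y < ccw_angle x z"
  shows "ccw_angle y z = ccw_angle x z - ccw_angle x y"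
proof (rule ccw_angle_unique)
  have "z = x * cis (ccw_angle x y) * cis (ccw_angle x z - ccw_angle x y)"
    using ccw_angle_rotates[of x z] assms by (simp add: mult.assoc flip: cis_mult)
      (simp add: cis_mult)
  then show "z = y * cis (ccw_angle x z - ccw_angle x y)"
    using ccw_angle_rotates[of x y] assms by simp
  show "y \<noteq> 0" "0 < ccw_angle x z - ccw_angle x y" "ccw_angle x z - ccw_angle x y \<le> 2 * pi"
    using assms ccw_angle_bounds[of x y] ccw_angle_bounds[of x z] by auto
qed

definition next_ccw :: "'b set \<Rightarrow> ('b \<Rightarrow> complex) \<Rightarrow> 'b \<Rightarrow> 'b" where
  "next_ccw N w a = arg_min_on (\<lambda>k. ccw_angle (w a) (w k)) N"

lemma next_ccw_in: "finite N \<Longrightarrow> a \<in> N \<Longrightarrow> next_ccw N w a \<in> N"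
  unfolding next_ccw_def by (rule arg_min_if_finite) auto

lemma next_ccw_least:
  "finite N \<Longrightarrow> k \<in> N \<Longrightarrow> ccw_angle (w a) (w (next_ccw N w a)) \<le> ccw_angle (w a) (w k)"
  unfolding next_ccw_def by (rule arg_min_least) auto

lemma next_ccw_funpow_in: "finite N \<Longrightarrow> a \<in> N \<Longrightarrow> (next_ccw N w ^^ m) a \<in> N"
  by (induction m) (auto intro: next_ccw_in)

lemma next_ccw_reaches:
  assumes fin: "finite N" and unit: "\<And>k. k \<in> N \<Longrightarrow> cmod (w k) = 1" and inj: "inj_on w N"
    and a: "a \<in> N" and b: "b \<in> N"
  shows "\<exists>m. (next_ccw N w ^^ m) a = b"
proof (rule ccontr)
  assume unreached: "\<nexists>m. (next_ccw N w ^^ m) a = b"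
  define orb where "orb = range (\<lambda>m. (next_ccw N w ^^ m) a)"
  have "orb \<subseteq> N" using next_ccw_funpow_in[OF fin a] by (auto simp: orb_def)
  then have "finite orb" using fin finite_subset by blast
  define p where "p = arg_min_on (\<lambda>p. ccw_angle (w p) (w b)) orb"
  have "orb \<noteq> {}" by (simp add: orb_def)
  then have "p \<in> orb"
    unfolding p_def using \<open>finite orb\<close> by (rule_tac arg_min_if_finite(1))
  have p_least: "ccw_angle (w p) (w b) \<le> ccw_angle (w q) (w b)" if "q \<in> orb" for q
    unfolding p_def using \<open>finite orb\<close> \<open>orb \<noteq> {}\<close> that by (rule arg_min_least)
  define n where "n = next_ccw N w p"
  have "n \<in> orb" using \<open>p \<in> orb\<close> unfolding orb_def n_def
    by (auto intro: range_eqI[of _ _ "Suc _"])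
  have "p \<in> N" "n \<in> N" using \<open>p \<in> orb\<close> \<open>n \<in> orb\<close> \<open>orb \<subseteq> N\<close> by auto
  have "n \<noteq> b" using \<open>n \<in> orb\<close> unreached by (auto simp: orb_def)
  then have "w n \<noteq> w b" using inj \<open>n \<in> N\<close> b by (auto dest: inj_onD)
  then have "ccw_angle (w p) (w n) \<noteq> ccw_angle (w p) (w b)"
    using ccw_angle_rotates unit \<open>p \<in> N\<close> \<open>n \<in> N\<close> b by metis
  moreover have "ccw_angle (w p) (w n) \<le> ccw_angle (w p) (w b)"
    using next_ccw_least[OF fin b] by (simp add: n_def)
  ultimately have "ccw_angle (w n) (w b) < ccw_angle (w p) (w b)"
    using ccw_angle_split[of "w p" "w n" "w b"] ccw_angle_bounds[of "w p" "w n"]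
      unit \<open>p \<in> N\<close> \<open>n \<in> N\<close> b by auto
  then show False using p_least[OF \<open>n \<in> orb\<close>] by simp
qed

section \<open>Face walks of rotation systems on trees\<close>

lemma inj_on_funpow:
  assumes "inj_on s D" "s ` D \<subseteq> D"
  shows "inj_on (s ^^ n) D"
proof (induction n)
  case (Suc n)
  then have "inj_on (s ^^ n) (s ` D)" using assms(2) inj_on_subset by blast
  then show ?case using assms(1) by (simp only: funpow_Suc_right comp_inj_on)
qed simp

lemma funpow_in: "s ` D \<subseteq> D \<Longrightarrow> d \<in> D \<Longrightarrow> (s ^^ n) d \<in> D"
  by (induction n) auto

lemma inj_on_funpow_periodic:
  assumes fin: "finite D" and into: "s ` D \<subseteq> D" and inj: "inj_on s D" and d: "d \<in> D"
  obtains n where "n > 0" "(s ^^ n) d = d"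
proof -
  have "\<not> inj_on (\<lambda>n. (s ^^ n) d) {0..card D}"
  proof
    assume "inj_on (\<lambda>n. (s ^^ n) d) {0..card D}"
    then have "card {0..card D} \<le> card D"
      using card_inj_on_le fin funpow_in[OF into d] by blast
    then show False by simp
  qed
  then obtain a b where "a < b" "(s ^^ a) d = (s ^^ b) d"
    by (metis (no_types, lifting) inj_onI linorder_neqE_nat)
  moreover have "(s ^^ a) ((s ^^ (b - a)) d) = (s ^^ (a + (b - a))) d"
    by (simp add: funpow_add)
  ultimately have "(s ^^ a) ((s ^^ (b - a)) d) = (s ^^ a) d"
    by simp
  then have "(s ^^ (b - a)) d = d"
    using inj_on_funpow[OF inj into] funpow_in[OF into d] d by (auto dest: inj_onD)
  with \<open>a < b\<close> show thesis by (intro that[of "b - a"]) auto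
qed

lemma rtrancl_funpow:
  assumes "\<And>x. x \<in> D \<Longrightarrow> (x, s x) \<in> R" "s ` D \<subseteq> D" "d \<in> D"
  shows "(d, (s ^^ n) d) \<in> R\<^sup>*"
proof (induction n)
  case (Suc n)
  then show ?case using assms funpow_in[of s D d n] by (auto intro: rtrancl_into_rtrancl)
qed simp

lemma cyclic_map_inj_on:
  assumes fin: "finite N" and into: "s ` N \<subseteq> N"
    and cyclic: "\<And>a b. a \<in> N \<Longrightarrow> b \<in> N \<Longrightarrow> \<exists>m. (s ^^ m) a = b"
  shows "inj_on s N"
proof (rule finite_surj_inj[OF fin], rule subsetI)
  fix b assume "b \<in> N"
  then obtain m where "(s ^^ m) (s b) = b" using cyclic into by blast
  then have "s ((s ^^ m) b) = b" by (simp add: funpow_swap1)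
  then show "b \<in> s ` N" using funpow_in[OF into \<open>b \<in> N\<close>] by (metis image_eqI)
qed

lemma rtrancl_adj_simple_path:
  assumes "(x, y) \<in> (adj F)\<^sup>*"
  shows "\<exists>xs. xs \<noteq> [] \<and> hd xs = x \<and> last xs = y \<and> distinct xs \<and>
    successively (\<lambda>a b. {a, b} \<in> F) xs"
  using assms
proof (induction rule: rtrancl_induct)
  case base
  show ?case by (intro exI[of _ "[x]"]) auto
next
  case (step y z)
  then obtain xs where xs: "xs \<noteq> []" "hd xs = x" "last xs = y" "distinct xs"
    "successively (\<lambda>a b. {a, b} \<in> F) xs" by blast
  show ?case
  proof (cases "z \<in> set xs")
    case True
    then obtain as bs where xs_split: "xs = as @ z # bs" by (meson split_list)
    then have "successively (\<lambda>a b. {a, b} \<in> F) (as @ [z])"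
      using xs(5) by (auto simp: successively_append_iff successively_Cons)
    moreover have "hd (as @ [z]) = x" using xs(2) xs_split by (cases as) auto
    ultimately show ?thesis using xs(4) xs_split by (intro exI[of _ "as @ [z]"]) auto
  next
    case False
    have "successively (\<lambda>a b. {a, b} \<in> F) (xs @ [z])"
      using xs step.hyps(2) by (auto simp: successively_append_iff adj_def)
    then show ?thesis using xs False by (intro exI[of _ "xs @ [z]"]) auto
  qed
qed

lemma simple_graph_edgeD:
  assumes "simple_graph V E" "{i, j} \<in> E"
  shows "i \<in> V" "j \<in> V" "i \<noteq> j"
proof -
  obtain a b where "{i, j} = {a, b}" "a \<in> V" "b \<in> V" "a \<noteq> b"
    using assms unfolding simple_graph_def by blast
  then show "i \<in> V" "j \<in> V" "i \<noteq> j" by (auto simp: doubleton_eq_iff)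
qed

lemma closed_path_not_acyclic:
  assumes "simple_graph V E" and "length xs \<ge> 3" "distinct xs"
    and path: "successively (\<lambda>a b. {a, b} \<in> E) xs" and closing: "{last xs, hd xs} \<in> E"
  shows "\<not> acyclic_graph V E"
proof -
  have cyc: "{xs ! k, xs ! ((k + 1) mod length xs)} \<in> E" if "k < length xs" for k
  proof (cases "Suc k < length xs")
    case True
    then show ?thesis using successively_nth[OF path] by simp
  next
    case False
    then have "Suc k = length xs" using that by simp
    then have "k = length xs - 1" "(k + 1) mod length xs = 0" by auto
    moreover have "xs \<noteq> []" using \<open>length xs \<ge> 3\<close> by auto
    ultimately show ?thesis using closing by (simp add: last_conv_nth hd_conv_nth)
  qed
  have "set xs \<subseteq> V"
  proof
    fix x assume "x \<in> set xs"
    then obtain k where "k < length xs" "x = xs ! k" by (auto simp: in_set_conv_nth)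
    then show "x \<in> V" using cyc simple_graph_edgeD(1)[OF \<open>simple_graph V E\<close>] by blast
  qed
  then show ?thesis using assms cyc unfolding acyclic_graph_def by blast
qed

lemma tree_edge_is_bridge:
  assumes tree: "is_tree V E" and ij: "{i, j} \<in> E"
  shows "(j, i) \<notin> (adj (E - {{i, j}}))\<^sup>*"
proof
  assume "(j, i) \<in> (adj (E - {{i, j}}))\<^sup>*"
  from rtrancl_adj_simple_path[OF this] obtain xs
    where xs: "xs \<noteq> []" "hd xs = j" "last xs = i" "distinct xs"
      and path: "successively (\<lambda>a b. {a, b} \<in> E - {{i, j}}) xs"
    by blast
  have "simple_graph V E" "acyclic_graph V E" using tree by (auto simp: is_tree_def)
  then have "i \<noteq> j" using ij by (blast dest: simple_graph_edgeD)
  have ji: "{j, i} = {i, j}" by blast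
  have "length xs \<ge> 3"
  proof (rule ccontr)
    assume "\<not> length xs \<ge> 3"
    then consider x where "xs = [x]" | x y where "xs = [x, y]"
      using xs(1) by (cases xs; cases "tl xs") (auto simp: Suc_le_eq)
    then show False
    proof cases
      case 1
      then show False using xs \<open>i \<noteq> j\<close> by simp
    next
      case 2
      then show False using xs path ji by simp
    qed
  qed
  moreover have "successively (\<lambda>a b. {a, b} \<in> E) xs"
    using path by (rule successively_mono) simp
  moreover have "{last xs, hd xs} \<in> E" using ij xs ji by simp
  ultimately show False
    using closed_path_not_acyclic \<open>simple_graph V E\<close> \<open>acyclic_graph V E\<close> xs(4) by blast
qed

definition nbrs :: "'a set set \<Rightarrow> 'a \<Rightarrow> 'a set" where
  "nbrs E i = {k. {i, k} \<in> E}"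

definition rotation_system :: "'a set set \<Rightarrow> ('a \<Rightarrow> 'a \<Rightarrow> 'a) \<Rightarrow> bool" where
  "rotation_system E \<sigma> \<longleftrightarrow>
     (\<forall>i. \<forall>j\<in>nbrs E i. \<sigma> i j \<in> nbrs E i \<and> (\<forall>k\<in>nbrs E i. \<exists>m. (\<sigma> i ^^ m) j = k))"

definition face_next :: "('a \<Rightarrow> 'a \<Rightarrow> 'a) \<Rightarrow> 'a \<times> 'a \<Rightarrow> 'a \<times> 'a" where
  "face_next \<sigma> = (\<lambda>(i, j). (\<sigma> i j, i))"

definition face_step :: "'a set set \<Rightarrow> ('a \<Rightarrow> 'a \<Rightarrow> 'a) \<Rightarrow> (('a \<times> 'a) \<times> ('a \<times> 'a)) set" where
  "face_step E \<sigma> = {(d, face_next \<sigma> d) | d. d \<in> darts E}"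

lemma darts_finite: "finite V \<Longrightarrow> simple_graph V E \<Longrightarrow> finite (darts E)"
  by (rule finite_subset[of _ "V \<times> V"]) (auto simp: darts_def dest: simple_graph_edgeD)

lemma nbrs_finite: "finite V \<Longrightarrow> simple_graph V E \<Longrightarrow> finite (nbrs E i)"
  by (rule finite_subset[of _ V]) (auto simp: nbrs_def dest: simple_graph_edgeD)

lemma face_next_darts:
  assumes "rotation_system E \<sigma>"
  shows "face_next \<sigma> ` darts E \<subseteq> darts E"
  using assms by (auto simp: rotation_system_def face_next_def darts_def nbrs_def insert_commute)

lemma face_next_inj_on:
  assumes "finite V" "simple_graph V E" "rotation_system E \<sigma>"
  shows "inj_on (face_next \<sigma>) (darts E)"
proof (rule inj_onI, clarify)
  fix i j i' j' assume "(i, j) \<in> darts E" "(i', j') \<in> darts E"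
    and eq: "face_next \<sigma> (i, j) = face_next \<sigma> (i', j')"
  then have "i' = i" "j \<in> nbrs E i" "j' \<in> nbrs E i" and "\<sigma> i j = \<sigma> i j'"
    by (auto simp: face_next_def darts_def nbrs_def)
  moreover have "finite (nbrs E i)" using assms(1,2) by (rule nbrs_finite)
  ultimately show "i = i' \<and> j = j'"
    using cyclic_map_inj_on[of "nbrs E i" "\<sigma> i"] assms(3)
    by (auto simp: rotation_system_def dest: inj_onD)
qed

context
  fixes V :: "'a set" and E :: "'a set set" and \<sigma> :: "'a \<Rightarrow> 'a \<Rightarrow> 'a"
  assumes fin: "finite V" and tree: "is_tree V E" and rot: "rotation_system E \<sigma>"
begin

lemma tree_face_step_reverse:
  assumes ij: "{i, j} \<in> E"
  shows "((j, i), (i, j)) \<in> (face_step E \<sigma>)\<^sup>*"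
proof -
  define S where "S = {x. (j, x) \<in> (adj (E - {{i, j}}))\<^sup>*}"
  have "i \<notin> S" using tree_edge_is_bridge[OF tree ij] by (simp add: S_def)
  have stays: "fst d \<in> S \<or> ((j, i), (i, j)) \<in> (face_step E \<sigma>)\<^sup>*"
    if "((j, i), d) \<in> (face_step E \<sigma>)\<^sup>*" for d
    using that
  proof (induction rule: rtrancl_induct)
    case base
    then show ?case by (simp add: S_def)
  next
    case (step d d')
    then obtain a b where d: "d = (a, b)" "{a, b} \<in> E" and d': "d' = (\<sigma> a b, a)"
      by (auto simp: face_step_def face_next_def darts_def)
    let ?k = "\<sigma> a b"
    have "{a, ?k} \<in> E" using rot d by (auto simp: rotation_system_def nbrs_def)
    consider "((j, i), (i, j)) \<in> (face_step E \<sigma>)\<^sup>*" | "a \<in> S" "{a, ?k} = {i, j}"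
      | "a \<in> S" "(a, ?k) \<in> adj (E - {{i, j}})"
      using step.IH d \<open>{a, ?k} \<in> E\<close> by (auto simp: adj_def)
    then show ?case
    proof cases
      case 2
      then have "d' = (i, j)" using \<open>i \<notin> S\<close> d' by (auto simp: doubleton_eq_iff)
      then show ?thesis using step.hyps by (meson rtrancl_into_rtrancl)
    next
      case 3
      then show ?thesis using d' by (auto simp: S_def intro: rtrancl_into_rtrancl)
    qed simp
  qed
  have sg: "simple_graph V E" using tree by (simp add: is_tree_def)
  have ji: "(j, i) \<in> darts E" using ij by (simp add: darts_def insert_commute)
  obtain n where "n > 0" "(face_next \<sigma> ^^ n) (j, i) = (j, i)"
    using inj_on_funpow_periodic[OF darts_finite[OF fin sg] face_next_darts[OF rot]
        face_next_inj_on[OF fin sg rot] ji] .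
  define p where "p = (face_next \<sigma> ^^ (n - 1)) (j, i)"
  have "face_next \<sigma> p = (j, i)"
    using \<open>n > 0\<close> \<open>(face_next \<sigma> ^^ n) (j, i) = (j, i)\<close>
    by (metis Suc_pred' comp_apply funpow.simps(2) p_def)
  then have "fst p = i" by (auto simp: face_next_def split: prod.splits)
  moreover have "((j, i), p) \<in> (face_step E \<sigma>)\<^sup>*"
    unfolding p_def using face_next_darts[OF rot] ji
    by (intro rtrancl_funpow) (auto simp: face_step_def)
  ultimately show ?thesis using stays \<open>i \<notin> S\<close> by fastforce
qed

lemma tree_face_step_around_vertex:
  assumes ij: "{i, j} \<in> E" and ik: "{i, k} \<in> E"
  shows "((i, j), (i, k)) \<in> (face_step E \<sigma>)\<^sup>*"
proof -
  have rotate: "((i, l), (i, \<sigma> i l)) \<in> (face_step E \<sigma>)\<^sup>*" if "l \<in> nbrs E i" for l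
  proof -
    have "((i, l), (\<sigma> i l, i)) \<in> face_step E \<sigma>"
      using that by (auto simp: face_step_def face_next_def darts_def nbrs_def)
    moreover have "{i, \<sigma> i l} \<in> E" using rot that by (simp add: rotation_system_def nbrs_def)
    ultimately show ?thesis
      using tree_face_step_reverse[of i "\<sigma> i l"] by (meson converse_rtrancl_into_rtrancl)
  qed
  have iterate:
    "(\<sigma> i ^^ m) j \<in> nbrs E i \<and> ((i, j), (i, (\<sigma> i ^^ m) j)) \<in> (face_step E \<sigma>)\<^sup>*" for m
  proof (induction m)
    case (Suc m)
    then show ?case using rot rotate[of "(\<sigma> i ^^ m) j"]
      by (auto simp: rotation_system_def intro: rtrancl_trans)
  qed (use ij in \<open>simp add: nbrs_def\<close>)
  obtain m where "(\<sigma> i ^^ m) j = k"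
    using rot ij ik unfolding rotation_system_def nbrs_def by blast
  then show ?thesis using iterate[of m] by simp
qed

theorem tree_face_step_connected:
  assumes "d \<in> darts E" "d' \<in> darts E"
  shows "(d, d') \<in> (face_step E \<sigma>)\<^sup>*"
proof -
  obtain i j x y where d: "d = (i, j)" "{i, j} \<in> E" and d': "d' = (x, y)" "{x, y} \<in> E"
    using assms by (auto simp: darts_def)
  have "simple_graph V E" "graph_connected V E" using tree by (auto simp: is_tree_def)
  then have "(i, x) \<in> (adj E)\<^sup>*"
    using d d' by (auto simp: graph_connected_def dest: simple_graph_edgeD)
  then have "((i, j), (x, y)) \<in> (face_step E \<sigma>)\<^sup>*" if "{x, y} \<in> E" for y
    using that
  proof (induction arbitrary: y)
    case base
    then show ?case using tree_face_step_around_vertex d by blast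
  next
    case (step x z)
    then have xz: "{x, z} \<in> E" by (simp add: adj_def)
    have "((i, j), (x, z)) \<in> (face_step E \<sigma>)\<^sup>*" using step.IH xz .
    also have "((x, z), (z, x)) \<in> (face_step E \<sigma>)\<^sup>*"
      using tree_face_step_reverse xz by (simp add: insert_commute)
    also have "((z, x), (z, y)) \<in> (face_step E \<sigma>)\<^sup>*"
      using tree_face_step_around_vertex xz step.prems by (simp add: insert_commute)
    finally show ?case .
  qed
  then show ?thesis using d d' by simp
qed

end

section \<open>Link positions of disjoint unit circles\<close>

lemma unit_circles_meet:
  assumes "dist a b \<le> 2"
  shows "unit_circle a \<inter> unit_circle b \<noteq> {}"
proof (cases "a = b")
  case True
  then have "a + 1 \<in> unit_circle a \<inter> unit_circle b" by (simp add: unit_circle_def dist_norm)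
  then show ?thesis by blast
next
  case False
  define d where "d = cmod (b - a)"
  have "0 < d" "d \<le> 2" using False assms by (auto simp: d_def dist_norm norm_minus_commute)
  then have "d\<^sup>2 \<le> 2\<^sup>2" by (intro power_mono) auto
  then have "1 / d\<^sup>2 - 1 / 4 \<ge> 0" using \<open>0 < d\<close> by (simp add: field_simps)
  define t where "t = sqrt (1 / d\<^sup>2 - 1 / 4)"
  have "t\<^sup>2 = 1 / d\<^sup>2 - 1 / 4" using \<open>1 / d\<^sup>2 - 1 / 4 \<ge> 0\<close> by (simp add: t_def)
  then have norms: "cmod (Complex (1 / 2) t) = 1 / d" "cmod (Complex (- 1 / 2) t) = 1 / d"
    using \<open>0 < d\<close> by (simp_all add: cmod_def real_sqrt_divide power2_eq_square)
  \<comment> \<open>the apex of the isosceles triangle with base from a to b and legs of length 1\<close>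
  define p where "p = a + (b - a) * Complex (1 / 2) t"
  have "p - b = (b - a) * Complex (- 1 / 2) t"
    by (simp add: p_def complex_eq_iff algebra_simps)
  then have "cmod (p - a) = 1" "cmod (p - b) = 1"
    using norms \<open>0 < d\<close> by (simp_all add: p_def norm_mult d_def)
  then have "p \<in> unit_circle a \<inter> unit_circle b"
    by (simp add: unit_circle_def dist_norm norm_minus_commute)
  then show ?thesis by blast
qed

definition link_dir :: "('a \<Rightarrow> complex) \<Rightarrow> 'a \<Rightarrow> 'a \<Rightarrow> complex" where
  "link_dir c i k = link_pos c i k - c i"

(* Conjugation turns clockwise travel (g i = -1) into counterclockwise travel. *)
definition oriented_link_dir :: "('a \<Rightarrow> complex) \<Rightarrow> ('a \<Rightarrow> int) \<Rightarrow> 'a \<Rightarrow> 'a \<Rightarrow> complex" where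
  "oriented_link_dir c g i k = (if g i = 1 then link_dir c i k else cnj (link_dir c i k))"

definition ring_rotation :: "('a \<Rightarrow> complex) \<Rightarrow> 'a set set \<Rightarrow> ('a \<Rightarrow> int) \<Rightarrow> 'a \<Rightarrow> 'a \<Rightarrow> 'a" where
  "ring_rotation c E g i = next_ccw (nbrs E i) (oriented_link_dir c g i)"

lemma arc_reach_link_pos_iff:
  assumes "g i \<in> {-1, 1}"
  shows "arc_reach c g i (link_pos c i j) (link_pos c i k) s \<longleftrightarrow>
    0 < s \<and> s \<le> 2 * pi \<and> oriented_link_dir c g i k = oriented_link_dir c g i j * cis s"
proof -
  have "link_pos c i k = c i + (link_pos c i j - c i) * cis (of_int (g i) * s) \<longleftrightarrow>
        link_dir c i k = link_dir c i j * cis (of_int (g i) * s)"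
    by (auto simp: link_dir_def algebra_simps)
  also have "\<dots> \<longleftrightarrow> oriented_link_dir c g i k = oriented_link_dir c g i j * cis s"
  proof (cases "g i = 1")
    case False
    then have "g i = -1" using assms by auto
    then show ?thesis
      using complex_cnj_cancel_iff[of "link_dir c i k" "link_dir c i j * cis (- s)"]
      by (simp add: oriented_link_dir_def cis_cnj)
  qed (simp add: oriented_link_dir_def)
  finally show ?thesis by (simp add: arc_reach_def)
qed

context
  fixes V :: "'a set" and c :: "'a \<Rightarrow> complex" and eps :: real and E :: "'a set set"
  assumes fin: "finite V"
    and disjoint: "\<forall>i\<in>V. \<forall>j\<in>V. i \<noteq> j \<longrightarrow> unit_circle (c i) \<inter> unit_circle (c j) = {}"
    and eps: "eps \<le> 2"
    and links: "E \<subseteq> potential_links V c eps"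
begin

lemma links_simple_graph: "simple_graph V E"
  using links unfolding simple_graph_def potential_links_def by blast

lemma link_center_dist:
  assumes "{i, k} \<in> E"
  shows "2 < cmod (c k - c i)" "cmod (c k - c i) \<le> 2 + eps"
proof -
  obtain a b where "{i, k} = {a, b}" "dist (c a) (c b) \<le> 2 + eps"
    using assms links by (auto simp: potential_links_def)
  then show "cmod (c k - c i) \<le> 2 + eps"
    by (auto simp: doubleton_eq_iff dist_norm norm_minus_commute)
  show "2 < cmod (c k - c i)"
  proof (rule ccontr)
    assume "\<not> 2 < cmod (c k - c i)"
    then have "unit_circle (c i) \<inter> unit_circle (c k) \<noteq> {}"
      by (intro unit_circles_meet) (simp add: dist_norm norm_minus_commute)
    then show False
      using disjoint simple_graph_edgeD[OF links_simple_graph assms] by blast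
  qed
qed

lemma link_dir_unit:
  assumes "{i, k} \<in> E"
  shows "cmod (link_dir c i k) = 1"
proof -
  have "cmod (c k - c i) \<noteq> 0" using link_center_dist(1)[OF assms] by linarith
  then show ?thesis by (simp add: link_dir_def link_pos_def norm_divide)
qed

lemma center_diff_link_dir:
  assumes "{i, k} \<in> E"
  shows "c k - c i = cmod (c k - c i) * link_dir c i k"
proof -
  have "cmod (c k - c i) \<noteq> 0" using link_center_dist(1)[OF assms] by linarith
  then show ?thesis by (simp add: link_dir_def link_pos_def)
qed

lemma link_dir_inj_on: "inj_on (link_dir c i) (nbrs E i)"
proof (rule inj_onI, rule ccontr)
  fix j k assume "j \<in> nbrs E i" "k \<in> nbrs E i" and "j \<noteq> k"
    and same: "link_dir c i j = link_dir c i k"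
  then have ij: "{i, j} \<in> E" and ik: "{i, k} \<in> E" by (auto simp: nbrs_def)
  \<comment> \<open>then c j and c k lie on one ray from c i, at distances in (2, 2 + eps]\<close>
  have "c j - c k = (c j - c i) - (c k - c i)" by simp
  also have "\<dots> = (cmod (c j - c i) - cmod (c k - c i)) * link_dir c i j"
    by (subst center_diff_link_dir[OF ij], subst center_diff_link_dir[OF ik])
      (simp add: same algebra_simps)
  finally have "c j - c k = (cmod (c j - c i) - cmod (c k - c i)) * link_dir c i j" .
  then have "dist (c j) (c k) = \<bar>cmod (c j - c i) - cmod (c k - c i)\<bar>"
    using link_dir_unit[OF ij] by (simp add: dist_norm norm_mult flip: of_real_diff)
  also have "\<dots> \<le> 2"
    using link_center_dist[OF ij] link_center_dist[OF ik] eps by (simp add: abs_le_iff)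
  finally have "unit_circle (c j) \<inter> unit_circle (c k) \<noteq> {}" by (rule unit_circles_meet)
  then show False
    using disjoint simple_graph_edgeD[OF links_simple_graph] ij ik \<open>j \<noteq> k\<close> by blast
qed

lemma ring_rotation_system: "rotation_system E (ring_rotation c E g)"
  unfolding rotation_system_def ring_rotation_def
proof (intro allI ballI conjI)
  fix i j k assume j: "j \<in> nbrs E i" and k: "k \<in> nbrs E i"
  have fin_nbrs: "finite (nbrs E i)" using fin links_simple_graph by (rule nbrs_finite)
  have inj: "inj_on (oriented_link_dir c g i) (nbrs E i)"
    using link_dir_inj_on by (auto simp: oriented_link_dir_def inj_on_def)
  have unit: "cmod (oriented_link_dir c g i l) = 1" if "l \<in> nbrs E i" for l
    using link_dir_unit that by (simp add: oriented_link_dir_def nbrs_def)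
  show "next_ccw (nbrs E i) (oriented_link_dir c g i) j \<in> nbrs E i"
    using fin_nbrs j by (rule next_ccw_in)
  show "\<exists>m. (next_ccw (nbrs E i) (oriented_link_dir c g i) ^^ m) j = k"
    using fin_nbrs unit inj j k by (rule next_ccw_reaches)
qed

lemma face_step_subset_ring_step:
  assumes directions: "\<forall>i\<in>V. g i \<in> {-1, 1}"
  shows "face_step E (ring_rotation c E g) \<subseteq> ring_step c E g"
proof clarify
  fix d d' assume "(d, d') \<in> face_step E (ring_rotation c E g)"
  then obtain i j
    where d: "d = (i, j)" "{i, j} \<in> E" and d': "d' = (ring_rotation c E g i j, i)"
    by (auto simp: face_step_def face_next_def darts_def)
  define w where "w = oriented_link_dir c g i"
  define k where "k = ring_rotation c E g i j"
  have "g i \<in> {-1, 1}" using directions simple_graph_edgeD[OF links_simple_graph d(2)] by blast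
  note arc_iff = arc_reach_link_pos_iff[of g i c, OF this]
  have "k \<in> nbrs E i"
    using ring_rotation_system[of g] d(2) by (simp add: k_def rotation_system_def nbrs_def)
  have unit: "cmod (w l) = 1" if "{i, l} \<in> E" for l
    using link_dir_unit[OF that] by (simp add: w_def oriented_link_dir_def)
  have "arc_reach c g i (link_pos c i j) (link_pos c i k) (ccw_angle (w j) (w k))"
    using \<open>k \<in> nbrs E i\<close> d(2) ccw_angle_bounds ccw_angle_rotates unit
    by (simp add: arc_iff w_def nbrs_def)
  moreover have "\<forall>k' s'. {i, k'} \<in> E \<longrightarrow>
      arc_reach c g i (link_pos c i j) (link_pos c i k') s' \<longrightarrow> ccw_angle (w j) (w k) \<le> s'"
  proof (intro allI impI)
    fix k' s' assume "{i, k'} \<in> E" "arc_reach c g i (link_pos c i j) (link_pos c i k') s'"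
    then have "s' = ccw_angle (w j) (w k')"
      using unit[OF d(2)] by (auto simp: arc_iff w_def intro!: ccw_angle_unique[symmetric])
    moreover have "finite (nbrs E i)" using fin links_simple_graph by (rule nbrs_finite)
    moreover have "k' \<in> nbrs E i" using \<open>{i, k'} \<in> E\<close> by (simp add: nbrs_def)
    ultimately show "ccw_angle (w j) (w k) \<le> s'"
      using next_ccw_least[of "nbrs E i" k' w j] by (simp add: k_def w_def ring_rotation_def)
  qed
  moreover have "{i, k} \<in> E" using \<open>k \<in> nbrs E i\<close> by (simp add: nbrs_def)
  ultimately have "((i, j), (k, i)) \<in> ring_step c E g"
    unfolding ring_step_def using d(2) by blast
  then show "(d, d') \<in> ring_step c E g" by (simp add: d d' k_def)
qed

end

theorem lemma7:
  fixes V :: "'a set" and c :: "'a \<Rightarrow> complex" and eps :: real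
    and E :: "'a set set" and f :: "'a \<Rightarrow> real" and g :: "'a \<Rightarrow> int"
  assumes "finite V" and "V \<noteq> {}"
    and "\<forall>i\<in>V. \<forall>j\<in>V. i \<noteq> j \<longrightarrow> unit_circle (c i) \<inter> unit_circle (c j) = {}"
    and "eps < 0.5"
    and "graph_connected V (potential_links V c eps)"
    and "SCS V c eps E f g"
    and "is_tree V E"
  shows "single_ring c E g"
proof -
  have links: "E \<subseteq> potential_links V c eps" and "schedule V f g"
    using \<open>SCS V c eps E f g\<close> by (auto simp: SCS_def comm_graph_def)
  then have directions: "\<forall>i\<in>V. g i \<in> {-1, 1}" by (simp add: schedule_def)
  have "eps \<le> 2" using \<open>eps < 0.5\<close> by simp
  note geometry = \<open>finite V\<close> assms(3) \<open>eps \<le> 2\<close> links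
  have rot: "rotation_system E (ring_rotation c E g)"
    by (rule ring_rotation_system[OF geometry])
  have "face_step E (ring_rotation c E g) \<subseteq> ring_step c E g"
    by (rule face_step_subset_ring_step[OF geometry directions])
  then have "(d, d') \<in> (ring_step c E g)\<^sup>*" if "d \<in> darts E" "d' \<in> darts E" for d d'
    using tree_face_step_connected[OF \<open>finite V\<close> \<open>is_tree V E\<close> rot that] rtrancl_mono
    by blast
  then show ?thesis by (simp add: single_ring_def)
qed

end
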